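(* Let $d\ge1$, $n\ge3$, $u\in\mathbb{C}\setminus\{0\}$. The two-sided ideal of $\mathrm{Y}_{d,n}(u)$ generated by $r_{1,2},\ldots,r_{n-2,n-1}$ (the defining ideal of $\mathrm{FTL}_{d,n}(u)$) is generated by any single element $r_{i,i+1}$, $1\le i\le n-2$.
   Context: The Yokonuma–Hecke algebra $\mathrm{Y}_{d,n}(u)$ is the unital associative $\mathbb{C}$-algebra with generators $g_1,\ldots,g_{n-1},t_1,\ldots,t_n$ and relations: $g_ig_j=g_jg_i$ for $|i-j|>1$; $g_{i+1}g_ig_{i+1}=g_ig_{i+1}g_i$; $t_it_j=t_jt_i$; $t_i^d=1$; $g_it_i=t_{i+1}g_i$; $g_it_{i+1}=t_ig_i$; $g_it_j=t_jg_i$ for $j\ne i,i+1$; $g_i^2=1+(u-1)e_i+(u-1)e_ig_i$, where $e_i=\frac1d\sum_{s=0}^{d-1}t_i^st_{i+1}^{d-s}$. For $w\in S_n$ with reduced expression $s_{i_1}\cdots s_{i_k}$ put $g_w=g_{i_1}\cdots g_{i_k}$; $g_{i,i+1}=\sum_{w\in\langle s_i,s_{i+1}\rangle}g_w$ and $r_{i,i+1}=\sum_{a,b=0}^{d-1}t_i^{a}t_{i+1}^{b-a}t_{i+2}^{-b}\,g_{i,i+1}$. $\mathrm{FTL}_{d,n}(u)$ is the quotient of $\mathrm{Y}_{d,n}(u)$ by the two-sided ideal generated by all $r_{i,i+1}$. *)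

theory Defs
  imports Complex_Main
begin

text \<open>A unital associative complex algebra is modelled as a ring type 'a together with a
  unital ring homomorphism phi from the complex numbers into the centre of 'a.\<close>

definition central_scalars :: "(complex \<Rightarrow> 'a::ring_1) \<Rightarrow> bool" where
  "central_scalars phi \<longleftrightarrow>
     phi 1 = 1 \<and> (\<forall>a b. phi (a + b) = phi a + phi b) \<and> (\<forall>a b. phi (a * b) = phi a * phi b)
     \<and> (\<forall>c x. phi c * x = x * phi c)"

definition ideal_gen :: "'a::ring_1 set \<Rightarrow> 'a set" where
  "ideal_gen S = {y. \<exists>as ss bs. length as = length ss \<and> length bs = length ss \<and> set ss \<subseteq> S \<and>
       y = (\<Sum>k<length ss. as ! k * ss ! k * bs ! k)}"

definition yh_e :: "(complex \<Rightarrow> 'a::ring_1) \<Rightarrow> nat \<Rightarrow> (nat \<Rightarrow> 'a) \<Rightarrow> nat \<Rightarrow> 'a" where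
  "yh_e phi d t i = phi (1 / of_nat d) * (\<Sum>s<d. t i ^ s * t (Suc i) ^ (d - s))"

definition yh_rels :: "(complex \<Rightarrow> 'a::ring_1) \<Rightarrow> nat \<Rightarrow> nat \<Rightarrow> complex \<Rightarrow>
    (nat \<Rightarrow> 'a) \<Rightarrow> (nat \<Rightarrow> 'a) \<Rightarrow> bool" where
  "yh_rels phi d n u g t \<longleftrightarrow>
     (\<forall>i j. 1 \<le> i \<and> i \<le> n - 1 \<and> 1 \<le> j \<and> j \<le> n - 1 \<and> (i + 1 < j \<or> j + 1 < i)
        \<longrightarrow> g i * g j = g j * g i) \<and>
     (\<forall>i. 1 \<le> i \<and> i \<le> n - 2 \<longrightarrow> g (i+1) * g i * g (i+1) = g i * g (i+1) * g i) \<and>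
     (\<forall>i j. 1 \<le> i \<and> i \<le> n \<and> 1 \<le> j \<and> j \<le> n \<longrightarrow> t i * t j = t j * t i) \<and>
     (\<forall>i. 1 \<le> i \<and> i \<le> n \<longrightarrow> t i ^ d = 1) \<and>
     (\<forall>i. 1 \<le> i \<and> i \<le> n - 1 \<longrightarrow> g i * t i = t (i+1) * g i) \<and>
     (\<forall>i. 1 \<le> i \<and> i \<le> n - 1 \<longrightarrow> g i * t (i+1) = t i * g i) \<and>
     (\<forall>i j. 1 \<le> i \<and> i \<le> n - 1 \<and> 1 \<le> j \<and> j \<le> n \<and> j \<noteq> i \<and> j \<noteq> i + 1
        \<longrightarrow> g i * t j = t j * g i) \<and>
     (\<forall>i. 1 \<le> i \<and> i \<le> n - 1 \<longrightarrow>
        g i ^ 2 = 1 + phi (u - 1) * yh_e phi d t i + phi (u - 1) * yh_e phi d t i * g i)"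

text \<open>g_{i,i+1}: sum of g_w over w in the parabolic subgroup generated by s_i, s_{i+1}
  (reduced words: 1, s_i, s_{i+1}, s_i s_{i+1}, s_{i+1} s_i, s_i s_{i+1} s_i).\<close>
definition yh_gsum :: "(nat \<Rightarrow> 'a::ring_1) \<Rightarrow> nat \<Rightarrow> 'a" where
  "yh_gsum g i = 1 + g i + g (i+1) + g i * g (i+1) + g (i+1) * g i + g i * g (i+1) * g i"

text \<open>r_{i,i+1} = sum_{a,b=0}^{d-1} t_i^a t_{i+1}^{b-a} t_{i+2}^{-b} g_{i,i+1}; negative exponents
  are written via t^d = 1: t^{b-a} = t^{b+d-a}, t^{-b} = t^{d-b}.\<close>
definition yh_r :: "nat \<Rightarrow> (nat \<Rightarrow> 'a::ring_1) \<Rightarrow> (nat \<Rightarrow> 'a) \<Rightarrow> nat \<Rightarrow> 'a" where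
  "yh_r d g t i = (\<Sum>a<d. \<Sum>b<d. t i ^ a * t (i+1) ^ (b + d - a) * t (i+2) ^ (d - b)) * yh_gsum g i"

end

theory Submission
  imports Defs
begin

text \<open>Conjugation by \<open>g_j g_{j+1} g_{j+2}\<close> raises every index in \<open>t_j, t_{j+1}, t_{j+2}, g_j, g_{j+1}\<close>
  by one, so it carries \<open>r_{j,j+1}\<close> to \<open>r_{j+1,j+2}\<close>.  The \<open>g_i\<close> are units (the quadratic
  relation can be inverted because \<open>e_i\<close> is an idempotent commuting with \<open>g_i\<close>), hence consecutive
  \<open>r\<close>'s generate the same principal ideal, and chaining these equalities shows that any single
  \<open>r_{i,i+1}\<close> generates all the others.\<close>

lemma ideal_gen_zero: "0 \<in> ideal_gen S"
  unfolding ideal_gen_def by (intro CollectI exI[of _ "[]"]) simp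

lemma generator_in_ideal_gen: "s \<in> S \<Longrightarrow> s \<in> ideal_gen S"
  unfolding ideal_gen_def by (intro CollectI exI[of _ "[1]"] exI[of _ "[s]"]) simp

lemma ideal_gen_add:
  assumes "x \<in> ideal_gen S" "y \<in> ideal_gen S"
  shows "x + y \<in> ideal_gen S"
proof -
  obtain as ss bs where x: "length as = length ss" "length bs = length ss" "set ss \<subseteq> S"
    "x = (\<Sum>k<length ss. as ! k * ss ! k * bs ! k)"
    using assms(1) unfolding ideal_gen_def by blast
  obtain as' ss' bs' where y: "length as' = length ss'" "length bs' = length ss'" "set ss' \<subseteq> S"
    "y = (\<Sum>k<length ss'. as' ! k * ss' ! k * bs' ! k)"
    using assms(2) unfolding ideal_gen_def by blast
  have split: "(\<Sum>k<m + p. f k) = (\<Sum>k<m. f k) + (\<Sum>k<p. f (m + k))" for m p and f :: "nat \<Rightarrow> 'a"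
    by (induction p) (simp_all add: add.assoc)
  have "x + y = (\<Sum>k<length (ss @ ss'). (as @ as') ! k * (ss @ ss') ! k * (bs @ bs') ! k)"
    unfolding length_append split using x y by (simp add: nth_append)
  then show ?thesis
    unfolding ideal_gen_def using x y
    by (intro CollectI exI[of _ "as @ as'"] exI[of _ "ss @ ss'"] exI[of _ "bs @ bs'"]) auto
qed

lemma ideal_gen_mult:
  assumes "x \<in> ideal_gen S"
  shows "a * x * b \<in> ideal_gen S"
proof -
  obtain as ss bs where x: "length as = length ss" "length bs = length ss" "set ss \<subseteq> S"
    "x = (\<Sum>k<length ss. as ! k * ss ! k * bs ! k)"
    using assms unfolding ideal_gen_def by blast
  have "a * x * b = (\<Sum>k<length ss. map ((*) a) as ! k * ss ! k * map (\<lambda>z. z * b) bs ! k)"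
    using x by (simp add: sum_distrib_left sum_distrib_right mult.assoc)
  then show ?thesis
    unfolding ideal_gen_def using x
    by (intro CollectI exI[of _ "map ((*) a) as"] exI[of _ ss] exI[of _ "map (\<lambda>z. z * b) bs"]) auto
qed

lemma ideal_gen_sum:
  fixes m :: nat
  shows "(\<And>k. k < m \<Longrightarrow> f k \<in> ideal_gen S) \<Longrightarrow> (\<Sum>k<m. f k) \<in> ideal_gen S"
  by (induction m) (auto intro: ideal_gen_add ideal_gen_zero)

lemma ideal_gen_least:
  assumes "S \<subseteq> ideal_gen T"
  shows "ideal_gen S \<subseteq> ideal_gen T"
proof
  fix y assume "y \<in> ideal_gen S"
  then obtain as ss bs where y: "length as = length ss" "length bs = length ss" "set ss \<subseteq> S"
    "y = (\<Sum>k<length ss. as ! k * ss ! k * bs ! k)"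
    unfolding ideal_gen_def by blast
  show "y \<in> ideal_gen T"
    unfolding y(4) by (intro ideal_gen_sum ideal_gen_mult) (use y assms nth_mem in blast)
qed

lemma power_mult_distrib_commuting:
  fixes x y :: "'a::monoid_mult"
  assumes "x * y = y * x"
  shows "(x * y) ^ n = x ^ n * y ^ n"
proof (induction n)
  case (Suc n)
  have "y * x ^ n = x ^ n * y"
    using power_commuting_commutes[OF assms] by simp
  then have "x * y * (x ^ n * y ^ n) = x * x ^ n * (y * y ^ n)"
    by (metis mult.assoc)
  then show ?case by (simp add: Suc)
qed simp

lemma intertwining_power:
  fixes x :: "'a::monoid_mult"
  assumes "x * p = q * x"
  shows "x * p ^ k = q ^ k * x"
proof (induction k)
  case (Suc k)
  have "x * p ^ Suc k = x * p * p ^ k" by (simp add: mult.assoc)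
  also have "\<dots> = q * (x * p ^ k)" by (simp add: assms mult.assoc)
  finally show ?case by (simp add: Suc mult.assoc)
qed simp

lemma intertwining_mult:
  fixes x :: "'a::monoid_mult"
  assumes "x * p = p' * x" "x * q = q' * x"
  shows "x * (p * q) = (p' * q') * x"
  by (simp flip: mult.assoc add: assms) (simp add: mult.assoc assms)

lemma intertwining_trans:
  fixes x :: "'a::monoid_mult"
  assumes "y * p = q * y" "x * q = r * x"
  shows "(x * y) * p = r * (x * y)"
  by (simp add: mult.assoc assms) (simp flip: mult.assoc add: assms)

lemma intertwining_add:
  fixes x :: "'a::ring_1"
  assumes "x * p = p' * x" "x * q = q' * x"
  shows "x * (p + q) = (p' + q') * x"
  by (simp add: assms distrib_left distrib_right)

lemma intertwining_sum:
  fixes x :: "'a::ring_1"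
  assumes "\<And>k. k \<in> A \<Longrightarrow> x * f k = f' k * x"
  shows "x * sum f A = sum f' A * x"
  by (simp add: sum_distrib_left sum_distrib_right assms)

definition invertible :: "'a::monoid_mult \<Rightarrow> bool" where
  "invertible x \<longleftrightarrow> (\<exists>h. x * h = 1 \<and> h * x = 1)"

lemma invertible_mult:
  assumes "invertible x" "invertible y"
  shows "invertible (x * y)"
proof -
  obtain hx hy where "x * hx = 1" "hx * x = 1" "y * hy = 1" "hy * y = 1"
    using assms unfolding invertible_def by blast
  then have "(x * y) * (hy * hx) = 1" "(hy * hx) * (x * y) = 1"
    by (metis mult.assoc mult_1_left)+
  then show ?thesis unfolding invertible_def by blast
qed

lemma ideal_gen_singleton_eq_if_conjugate:
  assumes "invertible x" "x * a = b * x"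
  shows "ideal_gen {a} = ideal_gen {b}"
proof -
  obtain h where h: "x * h = 1" "h * x = 1"
    using assms(1) unfolding invertible_def by blast
  have "b = x * a * h" using h by (simp add: assms(2) mult.assoc)
  moreover have "a = h * b * x" using h by (metis assms(2) mult.assoc mult_1_left)
  ultimately have "b \<in> ideal_gen {a}" "a \<in> ideal_gen {b}"
    by (metis ideal_gen_mult generator_in_ideal_gen singletonI)+
  then show ?thesis by (intro equalityI ideal_gen_least) auto
qed

lemma geometric_sum_absorbs_power:
  fixes w :: "'a::ring_1"
  assumes "w ^ d = 1"
  shows "w ^ k * (\<Sum>s<d. w ^ s) = (\<Sum>s<d. w ^ s)"
proof -
  have shift: "w * (\<Sum>s<d. w ^ s) = (\<Sum>s<d. w ^ s)"
  proof -
    have "1 + w * (\<Sum>s<d. w ^ s) = (\<Sum>s<Suc d. w ^ s)"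
      by (simp only: sum.lessThan_Suc_shift) (simp add: sum_distrib_left)
    also have "\<dots> = 1 + (\<Sum>s<d. w ^ s)" by (simp add: assms add.commute)
    finally show ?thesis by simp
  qed
  show ?thesis
    by (induction k) (simp_all add: mult.assoc shift)
qed

lemma geometric_sum_square:
  fixes w :: "'a::ring_1"
  assumes "w ^ d = 1"
  shows "(\<Sum>s<d. w ^ s) * (\<Sum>s<d. w ^ s) = of_nat d * (\<Sum>s<d. w ^ s)"
  by (simp add: sum_distrib_right geometric_sum_absorbs_power[OF assms])

lemma power_mult_power_diff_eq_power:
  fixes a b :: "'a::monoid_mult"
  assumes "a * b = b * a" "b ^ d = 1" "s < d"
  shows "a ^ s * b ^ (d - s) = (a * b ^ (d - 1)) ^ s"
proof (cases s)
  case (Suc k)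
  have "(d - 1) * s = (d - s) + d * k" using Suc assms(3) by (simp add: algebra_simps)
  then have exponent: "b ^ ((d - 1) * s) = b ^ (d - s)"
    by (simp add: power_add power_mult assms(2))
  have "a * b ^ (d - 1) = b ^ (d - 1) * a"
    using power_commuting_commutes[OF assms(1)[symmetric]] by simp
  then have "(a * b ^ (d - 1)) ^ s = a ^ s * (b ^ (d - 1)) ^ s"
    by (rule power_mult_distrib_commuting)
  also have "\<dots> = a ^ s * b ^ (d - s)"
    by (simp only: power_mult[symmetric] exponent)
  finally show ?thesis ..
qed (use assms in simp)

text \<open>With \<open>w = a * b ^ (d - 1)\<close>, morally \<open>a b\<inverse>\<close>, the sum is the geometric sum of \<open>w\<close>.\<close>

lemma root_of_unity_sum_square:
  fixes a b :: "'a::ring_1"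
  assumes "a * b = b * a" "a ^ d = 1" "b ^ d = 1"
  shows "(\<Sum>s<d. a ^ s * b ^ (d - s)) * (\<Sum>s<d. a ^ s * b ^ (d - s))
       = of_nat d * (\<Sum>s<d. a ^ s * b ^ (d - s))"
proof -
  define w where "w = a * b ^ (d - 1)"
  have sum_eq: "(\<Sum>s<d. a ^ s * b ^ (d - s)) = (\<Sum>s<d. w ^ s)"
    unfolding w_def using power_mult_power_diff_eq_power[OF assms(1,3)] by simp
  have "b ^ (d - 1) * a = a * b ^ (d - 1)"
    using power_commuting_commutes[OF assms(1)[symmetric]] by simp
  then have "w ^ d = a ^ d * (b ^ d) ^ (d - 1)"
    unfolding w_def by (simp add: power_mult_distrib_commuting flip: power_mult mult.commute)
  then have "w ^ d = 1" using assms(2,3) by simp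
  then show ?thesis unfolding sum_eq by (rule geometric_sum_square)
qed

lemma root_of_unity_sum_swap:
  fixes a b :: "'a::ring_1"
  assumes "a * b = b * a" "a ^ d = 1" "b ^ d = 1"
  shows "(\<Sum>s<d. b ^ s * a ^ (d - s)) = (\<Sum>s<d. a ^ s * b ^ (d - s))"
proof (cases d)
  case (Suc m)
  have "(\<Sum>s<d. a ^ s * b ^ (d - s)) = (\<Sum>i<d. a ^ (d - Suc i) * b ^ (d - (d - Suc i)))"
    by (rule sum.nat_diff_reindex[symmetric])
  also have "\<dots> = (\<Sum>i<m. a ^ (m - i) * b ^ Suc i) + 1"
    using assms(3) Suc by simp
  also have "\<dots> = (\<Sum>s<d. a ^ (d - s) * b ^ s)"
    unfolding Suc sum.lessThan_Suc_shift using assms(2) Suc by (simp add: add.commute)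
  also have "\<dots> = (\<Sum>s<d. b ^ s * a ^ (d - s))"
    by (intro sum.cong refl power_commuting_commutes[symmetric]
        power_commuting_commutes[OF assms(1), symmetric])
  finally show ?thesis ..
qed simp

lemma central_scalars_of_nat:
  assumes "central_scalars phi"
  shows "phi (of_nat m) = of_nat m"
proof (induction m)
  case 0
  have "phi (0 + 0) = phi 0 + phi 0" using assms unfolding central_scalars_def by blast
  then show ?case by simp
next
  case (Suc m)
  then show ?case using assms unfolding central_scalars_def by (simp add: add.commute)
qed

text \<open>\<open>g (g - C e) = 1 + C e\<close>, and \<open>1 + D e\<close> inverts \<open>1 + C e\<close> because \<open>e\<close> is idempotent and
  \<open>(1 + C) (1 + D) = 1\<close>.\<close>

lemma invertible_if_quadratic:
  fixes e g C D :: "'a::ring_1"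
  assumes e_idem: "e * e = e" and eg: "e * g = g * e"
    and quadratic: "g ^ 2 = 1 + C * e + C * e * g"
    and C_central: "\<And>x. C * x = x * C" and D_central: "\<And>x. D * x = x * D"
    and CD: "C + D + C * D = 0"
  shows "invertible g"
proof -
  have "C * e * (D * e) = C * (e * D) * e" by (simp only: mult.assoc)
  also have "\<dots> = C * (D * e) * e" by (simp only: D_central[of e])
  also have "\<dots> = C * D * (e * e)" by (simp only: mult.assoc)
  finally have "C * e * (D * e) = C * D * (e * e)" .
  then have "(1 + C * e) * (1 + D * e) = 1 + (C + D + C * D) * e"
    by (simp add: e_idem distrib_left distrib_right algebra_simps)
  then have inverse_factor: "(1 + C * e) * (1 + D * e) = 1"
    by (simp add: CD distrib_left distrib_right)
  have "g * (C * e) = C * g * e" by (simp only: mult.assoc[symmetric] C_central[of g, symmetric])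
  also have "\<dots> = C * e * g" by (simp only: mult.assoc eg)
  finally have "g * (C * e) = C * e * g" .
  then have left: "g * (g - C * e) = 1 + C * e"
    using quadratic by (simp add: right_diff_distrib power2_eq_square)
  have right: "(g - C * e) * g = 1 + C * e"
    using quadratic by (simp add: left_diff_distrib power2_eq_square mult.assoc)
  have "D * e * g = D * g * e" by (simp only: mult.assoc eg)
  also have "\<dots> = g * (D * e)" by (simp only: mult.assoc[symmetric] D_central[of g])
  finally have "D * e * g = g * (D * e)" .
  then have "(g - C * e) * (1 + D * e) * g = (g - C * e) * g * (1 + D * e)"
    by (simp add: mult.assoc distrib_left distrib_right)
  then have "g * ((g - C * e) * (1 + D * e)) = 1 \<and> ((g - C * e) * (1 + D * e)) * g = 1"
    using left right inverse_factor by (simp add: mult.assoc[symmetric])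
  then show ?thesis unfolding invertible_def by blast
qed

lemma yh_e_idempotent:
  fixes phi :: "complex \<Rightarrow> 'a::ring_1"
  assumes phi: "central_scalars phi" and "d \<ge> 1"
    and "t j * t (Suc j) = t (Suc j) * t j" "t j ^ d = 1" "t (Suc j) ^ d = 1"
  shows "yh_e phi d t j * yh_e phi d t j = yh_e phi d t j"
proof -
  define S where "S = (\<Sum>s<d. t j ^ s * t (Suc j) ^ (d - s))"
  define c where "c = phi (1 / of_nat d)"
  have c_central: "c * x = x * c" for x using phi unfolding central_scalars_def c_def by blast
  have "c * c * of_nat d = phi (1 / of_nat d * (1 / of_nat d) * of_nat d)"
    using phi central_scalars_of_nat[OF phi] unfolding central_scalars_def c_def by metis
  also have "1 / of_nat d * (1 / of_nat d) * of_nat d = (1 / of_nat d :: complex)"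
    using \<open>d \<ge> 1\<close> by simp
  finally have "c * c * of_nat d = c" unfolding c_def .
  moreover have "S * S = of_nat d * S"
    unfolding S_def using assms(3-5) by (rule root_of_unity_sum_square)
  moreover have "c * S * (c * S) = c * c * (S * S)"
  proof -
    have "c * S * (c * S) = c * (S * c) * S" by (simp only: mult.assoc)
    also have "\<dots> = c * c * (S * S)" by (simp only: c_central[of S, symmetric] mult.assoc)
    finally show ?thesis .
  qed
  ultimately have "c * S * (c * S) = c * S"
    by (simp flip: mult.assoc)
  then show ?thesis
    unfolding yh_e_def S_def[symmetric] c_def[symmetric] .
qed

lemma yh_e_commute:
  fixes phi :: "complex \<Rightarrow> 'a::ring_1"
  assumes phi: "central_scalars phi"
    and "t j * t (Suc j) = t (Suc j) * t j" "t j ^ d = 1" "t (Suc j) ^ d = 1"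
    and "x * t j = t (Suc j) * x" "x * t (Suc j) = t j * x"
  shows "yh_e phi d t j * x = x * yh_e phi d t j"
proof -
  define S where "S = (\<Sum>s<d. t j ^ s * t (Suc j) ^ (d - s))"
  have "x * S = (\<Sum>s<d. t (Suc j) ^ s * t j ^ (d - s)) * x"
    unfolding S_def using assms(5,6) by (intro intertwining_sum intertwining_mult intertwining_power)
  also have "(\<Sum>s<d. t (Suc j) ^ s * t j ^ (d - s)) = S"
    unfolding S_def using assms(2-4) by (rule root_of_unity_sum_swap)
  finally have "x * S = S * x" .
  moreover have "phi (1 / of_nat d) * x = x * phi (1 / of_nat d)"
    using phi unfolding central_scalars_def by blast
  ultimately show ?thesis
    unfolding yh_e_def S_def[symmetric] by (metis mult.assoc)
qed

lemma yh_relsD: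
  assumes "yh_rels phi d n u g t"
  shows yh_far_commute: "\<lbrakk>1 \<le> i; i + 1 < j; j \<le> n - 1\<rbrakk> \<Longrightarrow> g i * g j = g j * g i"
    and yh_braid: "\<lbrakk>1 \<le> i; i \<le> n - 2\<rbrakk> \<Longrightarrow> g (i+1) * g i * g (i+1) = g i * g (i+1) * g i"
    and yh_t_commute: "\<lbrakk>1 \<le> i; i \<le> n; 1 \<le> j; j \<le> n\<rbrakk> \<Longrightarrow> t i * t j = t j * t i"
    and yh_t_root: "\<lbrakk>1 \<le> i; i \<le> n\<rbrakk> \<Longrightarrow> t i ^ d = 1"
    and yh_g_t_left: "\<lbrakk>1 \<le> i; i \<le> n - 1\<rbrakk> \<Longrightarrow> g i * t i = t (i+1) * g i"
    and yh_g_t_right: "\<lbrakk>1 \<le> i; i \<le> n - 1\<rbrakk> \<Longrightarrow> g i * t (i+1) = t i * g i"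
    and yh_g_t_far: "\<lbrakk>1 \<le> i; i \<le> n - 1; 1 \<le> j; j \<le> n; j \<noteq> i; j \<noteq> i + 1\<rbrakk> \<Longrightarrow> g i * t j = t j * g i"
    and yh_quadratic: "\<lbrakk>1 \<le> i; i \<le> n - 1\<rbrakk> \<Longrightarrow>
      g i ^ 2 = 1 + phi (u - 1) * yh_e phi d t i + phi (u - 1) * yh_e phi d t i * g i"
  using assms unfolding yh_rels_def by auto

lemma yh_g_invertible:
  fixes phi :: "complex \<Rightarrow> 'a::ring_1"
  assumes phi: "central_scalars phi" and "d \<ge> 1" and "u \<noteq> 0"
    and R: "yh_rels phi d n u g t" and j: "1 \<le> j" "j \<le> n - 1"
  shows "invertible (g j)"
proof -
  have t_comm: "t j * t (Suc j) = t (Suc j) * t j"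
    and t_roots: "t j ^ d = 1" "t (Suc j) ^ d = 1"
    and g_swaps: "g j * t j = t (Suc j) * g j" "g j * t (Suc j) = t j * g j"
    and quadratic: "g j ^ 2 = 1 + phi (u - 1) * yh_e phi d t j + phi (u - 1) * yh_e phi d t j * g j"
    using yh_relsD[OF R] j by auto
  have phi_add: "phi (a + b) = phi a + phi b" and phi_mult: "phi (a * b) = phi a * phi b"
    and phi_central: "phi c * x = x * phi c" for a b c x
    using phi unfolding central_scalars_def by blast+
  have "(u - 1) + (1 / u - 1) + (u - 1) * (1 / u - 1) = 0"
    using \<open>u \<noteq> 0\<close> by (simp add: field_simps)
  then have "phi (u - 1) + phi (1 / u - 1) + phi (u - 1) * phi (1 / u - 1) = 0"
    using central_scalars_of_nat[OF phi, of 0] by (simp flip: phi_add phi_mult)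
  then show ?thesis
    using yh_e_idempotent[OF phi \<open>d \<ge> 1\<close> t_comm t_roots]
      yh_e_commute[OF phi t_comm t_roots g_swaps]
    by (intro invertible_if_quadratic[OF _ _ quadratic phi_central phi_central])
qed

lemma yh_r_conjugate:
  fixes phi :: "complex \<Rightarrow> 'a::ring_1"
  assumes R: "yh_rels phi d n u g t" and j: "1 \<le> j" "j + 3 \<le> n"
  shows "(g j * g (j+1) * g (j+2)) * yh_r d g t j = yh_r d g t (j+1) * (g j * g (j+1) * g (j+2))"
proof -
  define x where "x = g j * g (j+1) * g (j+2)"
  have g_t: "g (j+2) * t j = t j * g (j+2)" "g (j+1) * t j = t j * g (j+1)" "g j * t j = t (j+1) * g j"
    "g (j+2) * t (j+1) = t (j+1) * g (j+2)" "g (j+1) * t (j+1) = t (j+2) * g (j+1)"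
    "g j * t (j+2) = t (j+2) * g j"
    "g (j+2) * t (j+2) = t (j+3) * g (j+2)" "g (j+1) * t (j+3) = t (j+3) * g (j+1)"
    "g j * t (j+3) = t (j+3) * g j"
    using yh_relsD[OF R] j by (auto simp: numeral_3_eq_3)
  have far: "g j * g (j+2) = g (j+2) * g j"
    using yh_far_commute[OF R, of j "j+2"] j by simp
  have g_g: "g (j+2) * g j = g j * g (j+2)" "g j * g (j+2) = g (j+2) * g j"
    "(g j * g (j+1)) * g j = g (j+1) * (g j * g (j+1))"
    "(g (j+1) * g (j+2)) * g (j+1) = g (j+2) * (g (j+1) * g (j+2))"
    using far yh_braid[OF R, of j] yh_braid[OF R, of "j+1"] j by (simp_all add: mult.assoc)
  have x_t: "x * t j = t (j+1) * x" "x * t (j+1) = t (j+2) * x" "x * t (j+2) = t (j+3) * x"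
    unfolding x_def using g_t by (meson intertwining_trans)+
  have x_g: "x * g j = g (j+1) * x"
    unfolding x_def by (rule intertwining_trans[OF g_g(1) g_g(3)])
  have "g j * (g (j+1) * g (j+2)) * g (j+1) = g (j+2) * (g j * (g (j+1) * g (j+2)))"
    by (rule intertwining_trans[OF g_g(4) g_g(2)])
  then have x_g': "x * g (j+1) = g (j+2) * x"
    unfolding x_def by (simp only: mult.assoc)
  have t_part: "x * (\<Sum>a<d. \<Sum>b<d. t j ^ a * t (j+1) ^ (b + d - a) * t (j+2) ^ (d - b))
      = (\<Sum>a<d. \<Sum>b<d. t (j+1) ^ a * t (j+1+1) ^ (b + d - a) * t (j+1+2) ^ (d - b)) * x"
    using x_t by (intro intertwining_sum intertwining_mult intertwining_power) (simp_all add: numeral_3_eq_3)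
  have g_part: "x * yh_gsum g j = yh_gsum g (j+1) * x"
    unfolding yh_gsum_def using x_g x_g'
    by (intro intertwining_add intertwining_mult) simp_all
  show ?thesis
    unfolding x_def[symmetric] yh_r_def by (rule intertwining_mult[OF t_part g_part])
qed

lemma eq_if_consecutive_eq:
  assumes "\<And>k. a \<le> k \<Longrightarrow> k < b \<Longrightarrow> f (Suc k) = f k" and "a \<le> j" "j \<le> b"
  shows "f j = f a"
  using assms(2,3)
proof (induction rule: dec_induct)
  case (step k)
  then show ?case using assms(1) by simp
qed simp

lemma ideal_gen_yh_r_Suc:
  fixes phi :: "complex \<Rightarrow> 'a::ring_1"
  assumes phi: "central_scalars phi" and d: "d \<ge> 1" and u: "u \<noteq> 0"
    and R: "yh_rels phi d n u g t" and j: "1 \<le> j" "j + 3 \<le> n"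
  shows "ideal_gen {yh_r d g t (Suc j)} = ideal_gen {yh_r d g t j}"
proof -
  have "invertible (g j * g (j+1) * g (j+2))"
    using j by (intro invertible_mult yh_g_invertible[OF phi d u R]) simp_all
  from ideal_gen_singleton_eq_if_conjugate[OF this yh_r_conjugate[OF R j]]
  show ?thesis by simp
qed

theorem theorem4:
  fixes phi :: "complex \<Rightarrow> 'a::ring_1" and g t :: "nat \<Rightarrow> 'a" and d n i :: nat and u :: complex
  assumes "central_scalars phi"
    and "d \<ge> 1" and "n \<ge> 3" and "u \<noteq> 0"
    and "yh_rels phi d n u g t"
    and "1 \<le> i" and "i \<le> n - 2"
  shows "ideal_gen {yh_r d g t j | j. 1 \<le> j \<and> j \<le> n - 2} = ideal_gen {yh_r d g t i}"
proof -
  let ?I = "\<lambda>j. ideal_gen {yh_r d g t j}"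
  have to_first: "?I j = ?I 1" if "1 \<le> j" "j \<le> n - 2" for j
  proof (rule eq_if_consecutive_eq[OF _ that])
    fix k assume "1 \<le> k" "k < n - 2"
    then show "?I (Suc k) = ?I k" by (intro ideal_gen_yh_r_Suc[OF assms(1,2,4,5)]) simp_all
  qed
  have same_ideal: "?I j = ?I i" if "1 \<le> j" "j \<le> n - 2" for j
    using to_first[OF that] to_first[OF assms(6,7)] by simp
  show ?thesis
  proof (intro equalityI ideal_gen_least subsetI)
    fix r assume "r \<in> {yh_r d g t j | j. 1 \<le> j \<and> j \<le> n - 2}"
    then show "r \<in> ?I i" using same_ideal generator_in_ideal_gen by blast
  next
    fix r assume "r \<in> {yh_r d g t i}"
    then show "r \<in> ideal_gen {yh_r d g t j | j. 1 \<le> j \<and> j \<le> n - 2}"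
      using assms(6,7) by (auto intro: generator_in_ideal_gen)
  qed
qed

end
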